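(* Every matching of $X_{2k}$ of size $k\ge 4$ contains two separated pairs that have no edge in common.
   Context: Let $k\ge 1$ and let $X_{2k}=\{P_1,\dots,P_{2k}\}$ be $2k$ points in convex position in the plane, labeled in clockwise cyclic order; indices are taken modulo $2k$. A matching of $X_{2k}$ means a set of $k$ pairwise non-crossing straight segments (edges) with endpoints in $X_{2k}$ covering every point exactly once; its size is $k$. A block of a matching $M$ is a pair of edges $\{P_iP_{i+3},P_{i+1}P_{i+2}\}\subseteq M$; an antiblock is a pair of edges $\{P_iP_{i+1},P_{i+2}P_{i+3}\}\subseteq M$; a separated pair is a block or an antiblock. *)

theory Defs
  imports Main
begin

text \<open>Points P_1..P_{2k} of X_{2k} are modelled by their indices 0..<2k (index i stands
for P_{i+1}); indices are read modulo n = 2k.  Since the points are in convex position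
and labelled in cyclic order, two straight segments with four distinct endpoints cross
iff their endpoints interleave in the cyclic order.\<close>

definition chord :: "nat \<Rightarrow> nat set \<Rightarrow> bool" where
  "chord n e \<longleftrightarrow> (\<exists>i j. i < n \<and> j < n \<and> i \<noteq> j \<and> e = {i, j})"

definition crossing :: "nat set \<Rightarrow> nat set \<Rightarrow> bool" where
  "crossing e f \<longleftrightarrow> (\<exists>a b c d. e = {a, b} \<and> f = {c, d} \<and> a < c \<and> c < b \<and> b < d)"

definition noncrossing_matching :: "nat \<Rightarrow> nat set set \<Rightarrow> bool" where
  "noncrossing_matching k M \<longleftrightarrow>
     (\<forall>e\<in>M. chord (2*k) e) \<and>
     (\<forall>i<2*k. \<exists>!e. e \<in> M \<and> i \<in> e) \<and>
     (\<forall>e\<in>M. \<forall>f\<in>M. \<not> crossing e f)"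

definition block :: "nat \<Rightarrow> nat \<Rightarrow> nat set set" where
  "block n i = {{i mod n, (i+3) mod n}, {(i+1) mod n, (i+2) mod n}}"

definition antiblock :: "nat \<Rightarrow> nat \<Rightarrow> nat set set" where
  "antiblock n i = {{i mod n, (i+1) mod n}, {(i+2) mod n, (i+3) mod n}}"

definition separated_pair :: "nat \<Rightarrow> nat set set \<Rightarrow> nat set set \<Rightarrow> bool" where
  "separated_pair k M S \<longleftrightarrow> S \<subseteq> M \<and>
     (\<exists>i<2*k. S = block (2*k) i \<or> S = antiblock (2*k) i)"

end

theory Submission
  imports Defs
begin

text \<open>Call an interval {p..q} of points self-matched if the matching pairs its points among
themselves; it then has an even number of points. A self-matched interval of at least four points
contains a separated pair: follow the partner c of p and recurse into the self-matched interval
strictly inside {p..c}, into {p..c} itself, or into the part after c; with exactly four points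
the pair is a block or an antiblock.

Let b be the partner of the first point 0. If {0..b} and {b+1..2k-1} both have at least four
points, each contains a separated pair. Otherwise the matching has an edge {u,v} of two cyclically
consecutive points whose complement is a self-matched interval {p..q} of 2k-2 \<ge> 6 points. The
edge {u,v} forms a separated pair with {p,q}, with {p,p+1} and with {q-1,q}; a case distinction
on the partner of p shows that one of these is present together with a disjoint separated pair
inside {p..q}, or that {p..q} splits into two intervals each containing a separated pair.\<close>

lemma mod_less_double:
  fixes m n :: nat
  assumes "m < 2 * n"
  shows "m mod n = (if m < n then m else m - n)"
  using assms by (simp add: mod_if)

lemma separated_pairI:
  "i < 2*k \<Longrightarrow> S = block (2*k) i \<or> S = antiblock (2*k) i \<Longrightarrow> S \<subseteq> M \<Longrightarrow> separated_pair k M S"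
  unfolding separated_pair_def by blast

locale nc_matching =
  fixes k :: nat and M :: "nat set set"
  assumes matching: "noncrossing_matching k M"
begin

definition matched :: "nat \<Rightarrow> nat \<Rightarrow> bool" where
  "matched i j \<longleftrightarrow> {i, j} \<in> M"

lemma matched_sym: "matched i j \<Longrightarrow> matched j i"
  unfolding matched_def by (simp add: insert_commute)

lemma edge_chord: "e \<in> M \<Longrightarrow> chord (2*k) e"
  using matching unfolding noncrossing_matching_def by blast

lemma edge_card: "e \<in> M \<Longrightarrow> card e = 2"
  using edge_chord[of e] unfolding chord_def by force

lemma edges_disjoint:
  assumes "e \<in> M" "f \<in> M" "e \<noteq> f"
  shows "e \<inter> f = {}"
proof (rule ccontr)
  assume "e \<inter> f \<noteq> {}"
  then obtain x where x: "x \<in> e" "x \<in> f" by blast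
  with assms(1) have "x < 2*k" using edge_chord unfolding chord_def by auto
  then have "\<exists>!e. e \<in> M \<and> x \<in> e"
    using matching unfolding noncrossing_matching_def by blast
  with assms x show False by blast
qed

lemma matched_less: "matched i j \<Longrightarrow> i < 2*k \<and> j < 2*k \<and> i \<noteq> j"
  using edge_chord[of "{i, j}"] unfolding matched_def chord_def by (auto simp: doubleton_eq_iff)

lemma matched_unique: "matched i j \<Longrightarrow> matched i j' \<Longrightarrow> j = j'"
  using edges_disjoint[of "{i, j}" "{i, j'}"] unfolding matched_def by (auto simp: doubleton_eq_iff)

lemma matched_exists:
  assumes "i < 2*k"
  obtains j where "matched i j"
proof -
  obtain e where "e \<in> M" "i \<in> e"
    using matching assms unfolding noncrossing_matching_def by blast
  moreover obtain a b where "e = {a, b}"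
    using edge_chord[OF \<open>e \<in> M\<close>] unfolding chord_def by blast
  ultimately show ?thesis
    using that unfolding matched_def by (auto simp: insert_commute)
qed

lemma matched_nested:
  assumes ab: "matched a b" "a < b" and xy: "matched x y" and x: "a < x" "x < b"
  shows "a < y \<and> y < b"
proof -
  have not_crossing: "\<not> crossing e f" if "e \<in> M" "f \<in> M" for e f
    using matching that unfolding noncrossing_matching_def by blast
  have "y \<noteq> a" using matched_unique[of a b x] matched_sym[OF xy] ab x by auto
  moreover have "y \<noteq> b" using matched_unique[of b a x] matched_sym[OF xy] matched_sym[OF ab(1)] x by auto
  moreover have "\<not> y < a"
    using not_crossing[of "{y, x}" "{a, b}"] xy ab x
    unfolding matched_def crossing_def by (auto simp: insert_commute)
  moreover have "\<not> b < y"
    using not_crossing[of "{a, b}" "{x, y}"] xy ab x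
    unfolding matched_def crossing_def by auto
  ultimately show ?thesis by auto
qed

definition self_matched :: "nat \<Rightarrow> nat \<Rightarrow> bool" where
  "self_matched p q \<longleftrightarrow> q < 2*k \<and> (\<forall>x y. x \<in> {p..q} \<longrightarrow> matched x y \<longrightarrow> y \<in> {p..q})"

lemma self_matchedI:
  assumes "q < 2*k" "\<And>x y. p \<le> x \<Longrightarrow> x \<le> q \<Longrightarrow> matched x y \<Longrightarrow> p \<le> y \<and> y \<le> q"
  shows "self_matched p q"
  using assms unfolding self_matched_def atLeastAtMost_iff by blast

lemma self_matchedD:
  "self_matched p q \<Longrightarrow> p \<le> x \<Longrightarrow> x \<le> q \<Longrightarrow> matched x y \<Longrightarrow> p \<le> y \<and> y \<le> q"
  unfolding self_matched_def atLeastAtMost_iff by blast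

lemma self_matched_partner:
  assumes "self_matched p q" "p \<le> x" "x \<le> q"
  obtains y where "matched x y" "p \<le> y" "y \<le> q" "y \<noteq> x"
proof -
  have "x < 2*k" using assms unfolding self_matched_def by linarith
  then obtain y where y: "matched x y" by (rule matched_exists)
  moreover have "y \<in> {p..q}" using self_matchedD[OF assms y] by simp
  moreover have "y \<noteq> x" using matched_less[OF y] by simp
  ultimately show ?thesis using that by simp
qed

lemma self_matched_card_even:
  assumes "self_matched p q"
  shows "even (card {p..q})"
proof -
  let ?C = "{e \<in> M. e \<subseteq> {p..q}}"
  have "\<Union>?C = {p..q}"
  proof (intro equalityI subsetI)
    fix x assume x: "x \<in> {p..q}"
    then obtain y where "matched x y" "y \<in> {p..q}"
      using assms by (auto elim: self_matched_partner)
    with x show "x \<in> \<Union>?C" unfolding matched_def by blast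
  qed blast
  moreover have "2 dvd card (\<Union>?C)"
    by (rule dvd_partition) (use \<open>\<Union>?C = {p..q}\<close> edge_card edges_disjoint in auto)
  ultimately show ?thesis by simp
qed

lemma self_matched_odd_length: "self_matched p q \<Longrightarrow> p \<le> q \<Longrightarrow> odd (q - p)"
  using self_matched_card_even[of p q] by (simp add: Suc_diff_le)

lemma self_matched_inside:
  assumes "matched a b" "a < b"
  shows "self_matched (a + 1) (b - 1)"
  using matched_less[OF assms(1)] matched_nested[OF assms] by (intro self_matchedI) force+

lemma self_matched_edge:
  assumes "matched a b" "a < b"
  shows "self_matched a b"
proof (rule self_matchedI)
  show "b < 2*k" using matched_less[OF assms(1)] by simp
  fix x y assume x: "a \<le> x" "x \<le> b" and xy: "matched x y"
  consider "x = a" | "x = b" | "a < x" "x < b" using x by linarith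
  then show "a \<le> y \<and> y \<le> b"
  proof cases
    case 1
    then show ?thesis using matched_unique[of a b y] xy assms by simp
  next
    case 2
    then show ?thesis using matched_unique[of b a y] xy matched_sym[OF assms(1)] assms by simp
  next
    case 3
    then show ?thesis using matched_nested[OF assms xy] by simp
  qed
qed

lemma self_matched_after:
  assumes I: "self_matched p q" and pc: "matched p c" "p < c"
  shows "self_matched (c + 1) q"
proof (rule self_matchedI)
  show "q < 2*k" using I unfolding self_matched_def by simp
  fix x y assume x: "c + 1 \<le> x" "x \<le> q" and xy: "matched x y"
  have "p \<le> x" using x pc(2) by linarith
  with x xy I have "p \<le> y \<and> y \<le> q" using self_matchedD by blast
  moreover have "y \<noteq> p" using matched_unique[of p c x] matched_sym[OF xy] pc x by auto
  moreover have "y \<noteq> c" using matched_unique[of c p x] matched_sym[OF xy] matched_sym[OF pc(1)] x pc by auto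
  moreover have "\<not> (p < y \<and> y < c)"
    using matched_nested[OF pc matched_sym[OF xy]] x by auto
  ultimately show "c + 1 \<le> y \<and> y \<le> q" by auto
qed

lemma matched_odd_distance:
  assumes "matched a b" "a < b"
  shows "odd (b - a)"
proof -
  have "card {a + 1..b - 1} = b - a - 1" using assms by simp
  then show ?thesis using self_matched_card_even[OF self_matched_inside[OF assms]] assms by presburger
qed

definition pair_within :: "nat \<Rightarrow> nat \<Rightarrow> nat set set \<Rightarrow> bool" where
  "pair_within p q S \<longleftrightarrow> separated_pair k M S \<and> \<Union>S \<subseteq> {p..q}"

lemma pair_within_mono: "pair_within p q S \<Longrightarrow> p' \<le> p \<Longrightarrow> q \<le> q' \<Longrightarrow> pair_within p' q' S"
  unfolding pair_within_def by auto

lemma pair_within_avoids: "pair_within p q S \<Longrightarrow> x \<in> e \<Longrightarrow> x \<notin> {p..q} \<Longrightarrow> e \<notin> S"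
  unfolding pair_within_def by blast

lemma pair_within_disjoint:
  assumes S: "pair_within p q S" and T: "pair_within p' q' T" and "q < p'"
  shows "S \<inter> T = {}"
proof (rule ccontr)
  assume "S \<inter> T \<noteq> {}"
  then obtain e where e: "e \<in> S" "e \<in> T" by blast
  then have "e \<in> M" using S unfolding pair_within_def separated_pair_def by blast
  then obtain x where x: "x \<in> e" using edge_card by force
  then have "x \<le> q" using S e unfolding pair_within_def by auto
  then show False using pair_within_avoids[OF T x] e \<open>q < p'\<close> by simp
qed

lemma pair_within_block:
  assumes "matched p (p + 3)" "matched (p + 1) (p + 2)"
  shows "pair_within p (p + 3) (block (2*k) p)"
proof -
  have "p + 3 < 2*k" using matched_less[OF assms(1)] by simp
  then have blk: "block (2*k) p = {{p, p + 3}, {p + 1, p + 2}}" unfolding block_def by simp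
  have "separated_pair k M (block (2*k) p)"
    using \<open>p + 3 < 2*k\<close> assms by (intro separated_pairI[of p]) (auto simp: blk matched_def)
  then show ?thesis unfolding pair_within_def blk by auto
qed

lemma pair_within_antiblock:
  assumes "matched p (p + 1)" "matched (p + 2) (p + 3)"
  shows "pair_within p (p + 3) (antiblock (2*k) p)"
proof -
  have "p + 3 < 2*k" using matched_less[OF assms(2)] by simp
  then have blk: "antiblock (2*k) p = {{p, p + 1}, {p + 2, p + 3}}" unfolding antiblock_def by simp
  have "separated_pair k M (antiblock (2*k) p)"
    using \<open>p + 3 < 2*k\<close> assms by (intro separated_pairI[of p]) (auto simp: blk matched_def)
  then show ?thesis unfolding pair_within_def blk by auto
qed

lemma self_matched_four:
  assumes "self_matched p (p + 3)"
  shows "\<exists>S. pair_within p (p + 3) S"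
proof -
  obtain c where c: "matched p c" "p \<le> c" "c \<le> p + 3" "c \<noteq> p"
    using self_matched_partner[OF assms, of p] by auto
  then have "p < c" by simp
  with c have "odd (c - p)" using matched_odd_distance by blast
  with c have "c = p + 3 \<or> c = p + 1" by presburger
  then show ?thesis
  proof
    assume "c = p + 3"
    obtain y where y: "matched (p + 1) y" "p + 1 \<le> y" "y \<le> p + 2" "y \<noteq> p + 1"
      using self_matched_partner[OF self_matched_inside[OF c(1) \<open>p < c\<close>], of "p + 1"]
        \<open>c = p + 3\<close> by auto
    moreover from y have "y = p + 2" by linarith
    ultimately have "matched (p + 1) (p + 2)" by simp
    then show ?thesis using pair_within_block c(1) \<open>c = p + 3\<close> by blast
  next
    assume "c = p + 1"
    obtain y where y: "matched (p + 2) y" "p + 2 \<le> y" "y \<le> p + 3" "y \<noteq> p + 2"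
      using self_matched_partner[OF self_matched_after[OF assms c(1) \<open>p < c\<close>], of "p + 2"]
        \<open>c = p + 1\<close> by auto
    moreover from y have "y = p + 3" by linarith
    ultimately have "matched (p + 2) (p + 3)" by simp
    then show ?thesis using pair_within_antiblock c(1) \<open>c = p + 1\<close> by blast
  qed
qed

lemma self_matched_has_pair:
  "self_matched p q \<Longrightarrow> p + 3 \<le> q \<Longrightarrow> \<exists>S. pair_within p q S"
proof (induction "q - p" arbitrary: p q rule: less_induct)
  case less
  have "odd (q - p)" using self_matched_odd_length[OF less.prems(1)] less.prems(2) by simp
  then have "q = p + 3 \<or> p + 5 \<le> q" using less.prems(2) by presburger
  then show ?case
  proof
    assume "q = p + 3"
    then show ?thesis using self_matched_four less.prems(1) by blast
  next
    assume long: "p + 5 \<le> q"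
    obtain c where c: "matched p c" "p \<le> c" "c \<le> q" "c \<noteq> p"
      using self_matched_partner[OF less.prems(1), of p] long by auto
    then have "p < c" by simp
    with c have "odd (c - p)" using matched_odd_distance by blast
    with c have "c = q \<or> (p + 3 \<le> c \<and> c < q) \<or> c = p + 1" by presburger
    then consider "c = q" | "p + 3 \<le> c" "c < q" | "c = p + 1" by blast
    then show ?thesis
    proof cases
      case 1
      have "self_matched (p + 1) (q - 1)" using self_matched_inside[OF c(1) \<open>p < c\<close>] 1 by simp
      moreover have "q - 1 - (p + 1) < q - p" "p + 1 + 3 \<le> q - 1" using long by linarith+
      ultimately obtain S where "pair_within (p + 1) (q - 1) S" using less.hyps by blast
      then show ?thesis using pair_within_mono[of "p + 1" "q - 1" S p q] by auto
    next
      case 2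
      have "self_matched p c" using self_matched_edge[OF c(1) \<open>p < c\<close>] .
      moreover have "c - p < q - p" using 2 by linarith
      ultimately obtain S where "pair_within p c S" using less.hyps 2 by blast
      then show ?thesis using pair_within_mono[of p c S p q] 2 by auto
    next
      case 3
      have "self_matched (p + 2) q" using self_matched_after[OF less.prems(1) c(1) \<open>p < c\<close>] 3 by simp
      moreover have "q - (p + 2) < q - p" "p + 2 + 3 \<le> q" using long by linarith+
      ultimately obtain S where "pair_within (p + 2) q S" using less.hyps by blast
      then show ?thesis using pair_within_mono[of "p + 2" q S p q] by auto
    qed
  qed
qed

lemma disjoint_pairs_beside_edge:
  assumes I: "self_matched p q" and long: "p + 5 \<le> q"
    and uv: "matched u v" "u \<notin> {p..q}"
    and shape_block: "block (2*k) q = {{q, p}, {u, v}}"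
    and shape_left: "antiblock (2*k) u = {{u, v}, {p, p + 1}}"
    and shape_right: "antiblock (2*k) (q - 1) = {{q - 1, q}, {u, v}}"
  shows "\<exists>S T. separated_pair k M S \<and> separated_pair k M T \<and> S \<inter> T = {}"
proof -
  have "q < 2*k" "u < 2*k" using I matched_less[OF uv(1)] unfolding self_matched_def by auto
  have uvM: "{u, v} \<in> M" using uv(1) unfolding matched_def .
  obtain c where c: "matched p c" "p \<le> c" "c \<le> q" "c \<noteq> p"
    using self_matched_partner[OF I, of p] long by auto
  then have "p < c" by simp
  with c have "odd (c - p)" using matched_odd_distance by blast
  with c have "c = q \<or> c = p + 1 \<or> (p + 3 \<le> c \<and> c < q)" by presburger
  then consider "c = q" | "c = p + 1" | "p + 3 \<le> c" "c < q" by blast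
  then show ?thesis
  proof cases
    case 1
    let ?S = "block (2*k) q"
    have "?S \<subseteq> M" unfolding shape_block using c(1) 1 uvM by (simp add: matched_def insert_commute)
    then have S: "separated_pair k M ?S" using separated_pairI \<open>q < 2*k\<close> by blast
    have "self_matched (p + 1) (q - 1)" using self_matched_inside[OF c(1) \<open>p < c\<close>] 1 by simp
    then obtain T where T: "pair_within (p + 1) (q - 1) T" using self_matched_has_pair long by fastforce
    have "u \<notin> {p + 1..q - 1}" using uv(2) by auto
    then have "{q, p} \<notin> T" "{u, v} \<notin> T"
      using pair_within_avoids[OF T, of p] pair_within_avoids[OF T, of u] by auto
    then have "?S \<inter> T = {}" unfolding shape_block by blast
    with S T show ?thesis unfolding pair_within_def by blast
  next
    case 2
    let ?S = "antiblock (2*k) u"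
    have "?S \<subseteq> M" unfolding shape_left using c(1) 2 uvM by (simp add: matched_def)
    then have S: "separated_pair k M ?S" using separated_pairI \<open>u < 2*k\<close> by blast
    have "self_matched (p + 2) q" using self_matched_after[OF I c(1) \<open>p < c\<close>] 2 by simp
    then obtain T where T: "pair_within (p + 2) q T" using self_matched_has_pair long by fastforce
    have "u \<notin> {p + 2..q}" using uv(2) by auto
    then have "{p, p + 1} \<notin> T" "{u, v} \<notin> T"
      using pair_within_avoids[OF T, of p] pair_within_avoids[OF T, of u] by auto
    then have "?S \<inter> T = {}" unfolding shape_left by blast
    with S T show ?thesis unfolding pair_within_def by blast
  next
    case 3
    obtain S where S: "pair_within p c S"
      using self_matched_has_pair[OF self_matched_edge[OF c(1) \<open>p < c\<close>]] 3 by blast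
    have R: "self_matched (c + 1) q" using self_matched_after[OF I c(1) \<open>p < c\<close>] .
    then have "odd (q - (c + 1))" using self_matched_odd_length 3 by simp
    then have "c + 4 \<le> q \<or> q = c + 2" using 3 by presburger
    then show ?thesis
    proof
      assume "c + 4 \<le> q"
      then obtain T where T: "pair_within (c + 1) q T" using self_matched_has_pair[OF R] by fastforce
      have "S \<inter> T = {}" using pair_within_disjoint[OF S T] by simp
      with S T show ?thesis unfolding pair_within_def by blast
    next
      assume "q = c + 2"
      obtain y where y: "matched (q - 1) y" "c + 1 \<le> y" "y \<le> q" "y \<noteq> q - 1"
        using self_matched_partner[OF R, of "q - 1"] \<open>q = c + 2\<close> by auto
      then have "y = q" using \<open>q = c + 2\<close> by linarith
      let ?T = "antiblock (2*k) (q - 1)"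
      have "?T \<subseteq> M" unfolding shape_right using y(1) \<open>y = q\<close> uvM by (simp add: matched_def)
      moreover have "q - 1 < 2*k" using \<open>q < 2*k\<close> by simp
      ultimately have T: "separated_pair k M ?T" using separated_pairI by blast
      have "u \<notin> {p..c}" "q - 1 \<notin> {p..c}" using uv(2) 3 \<open>q = c + 2\<close> by auto
      then have "{q - 1, q} \<notin> S" "{u, v} \<notin> S"
        using pair_within_avoids[OF S, of "q - 1"] pair_within_avoids[OF S, of u] by auto
      then have "S \<inter> ?T = {}" unfolding shape_right by blast
      with S T show ?thesis unfolding pair_within_def by blast
    qed
  qed
qed

lemma arc_complement_matched:
  assumes I: "self_matched p q" and arc: "q + 3 = p + 2*k"
  shows "matched ((q + 1) mod (2*k)) ((q + 2) mod (2*k))"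
    and "(q + 1) mod (2*k) \<notin> {p..q}"
proof -
  define n where "n = 2*k"
  define u v where "u = (q + 1) mod n" and "v = (q + 2) mod n"
  have "q < n" using I unfolding self_matched_def n_def by simp
  have outside: "x = u \<or> x = v" if "x < n" "x \<notin> {p..q}" for x
  proof (cases "q < x")
    case True
    then have "x = q + 1 \<or> x = q + 2" using that(1) arc n_def by linarith
    then show ?thesis using that(1) unfolding u_def v_def by auto
  next
    case False
    then have "x + n = q + 1 \<or> x + n = q + 2" using that \<open>q < n\<close> arc n_def by auto
    then show ?thesis using that(1) unfolding u_def v_def by (metis mod_add_self2 mod_less)
  qed
  show "u \<notin> {p..q}"
    using \<open>q < n\<close> arc mod_less_double[of "q + 1" n] unfolding u_def n_def by auto
  moreover have "u < n" using \<open>q < n\<close> unfolding u_def by simp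
  moreover obtain y where y: "matched u y" using matched_exists \<open>u < n\<close> n_def by blast
  moreover have "y \<notin> {p..q}"
    using self_matchedD[OF I, of y u] matched_sym[OF y] \<open>u \<notin> {p..q}\<close> by auto
  ultimately show "matched u v" using outside[of y] matched_less[OF y] n_def by auto
qed

lemma disjoint_pairs_beside_arc:
  assumes I: "self_matched p q" and long: "p + 5 \<le> q" and arc: "q + 3 = p + 2*k"
  shows "\<exists>S T. separated_pair k M S \<and> separated_pair k M T \<and> S \<inter> T = {}"
proof -
  define n where "n = 2*k"
  define u v where "u = (q + 1) mod n" and "v = (q + 2) mod n"
  have "q < n" using I unfolding self_matched_def n_def by simp
  have q3: "q + 3 = p + n" and q4: "q + 4 = p + 1 + n" using arc n_def by simp_all
  have p_mod: "(q + 3) mod n = p" and p1_mod: "(q + 4) mod n = p + 1"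
    unfolding q3 q4 mod_add_self2 using long \<open>q < n\<close> by simp_all
  have sums: "q + 1 + 1 = q + 2" "q + 1 + 2 = q + 3" "q + 1 + 3 = q + 4" by simp_all
  have u_mods: "(u + 1) mod n = v" "(u + 2) mod n = p" "(u + 3) mod n = p + 1"
    unfolding u_def v_def mod_add_left_eq sums p_mod p1_mod by (rule refl)+
  show ?thesis
  proof (rule disjoint_pairs_beside_edge[OF I long])
    show "matched u v" "u \<notin> {p..q}"
      using arc_complement_matched[OF I arc] unfolding u_def v_def n_def by blast+
    show "block (2*k) q = {{q, p}, {u, v}}"
      using \<open>q < n\<close> p_mod unfolding block_def u_def v_def n_def by simp
    show "antiblock (2*k) u = {{u, v}, {p, p + 1}}"
      unfolding antiblock_def n_def[symmetric] u_mods by (simp add: u_def)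
    have "q - 1 + 1 = q" "q - 1 + 2 = q + 1" "q - 1 + 3 = q + 2" using long by simp_all
    then show "antiblock (2*k) (q - 1) = {{q - 1, q}, {u, v}}"
      using \<open>q < n\<close> unfolding antiblock_def u_def v_def n_def by simp
  qed
qed

end

theorem mainTheorem6:
  fixes k :: nat and M :: "nat set set"
  assumes "k \<ge> 4" and "noncrossing_matching k M"
  shows "\<exists>S T. separated_pair k M S \<and> separated_pair k M T \<and> S \<inter> T = {}"
proof -
  interpret nc_matching k M using assms(2) by unfold_locales
  have whole: "self_matched 0 (2*k - 1)"
  proof (rule self_matchedI)
    fix x y assume "matched x y"
    then show "0 \<le> y \<and> y \<le> 2*k - 1" using matched_less[of x y] by arith
  qed (use assms(1) in simp)
  obtain b where b: "matched 0 b" "b \<le> 2*k - 1" "b \<noteq> 0"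
    using self_matched_partner[OF whole, of 0] by auto
  then have "0 < b" by simp
  with b have "odd b" using matched_odd_distance by fastforce
  with b assms(1) have "b = 1 \<or> b = 2*k - 1 \<or> b = 2*k - 3 \<or> (3 \<le> b \<and> b \<le> 2*k - 5)"
    by presburger
  then consider "b = 1" | "b = 2*k - 1" | "b = 2*k - 3" | "3 \<le> b" "b \<le> 2*k - 5" by blast
  then show ?thesis
  proof cases
    case 1
    then show ?thesis using disjoint_pairs_beside_arc[OF self_matched_after[OF whole b(1) \<open>0 < b\<close>]] assms(1)
      by simp
  next
    case 2
    then show ?thesis using disjoint_pairs_beside_arc[OF self_matched_inside[OF b(1) \<open>0 < b\<close>]] assms(1)
      by simp
  next
    case 3
    then show ?thesis using disjoint_pairs_beside_arc[OF self_matched_edge[OF b(1) \<open>0 < b\<close>]] assms(1)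
      by simp
  next
    case 4
    obtain S where S: "pair_within 0 b S"
      using self_matched_has_pair[OF self_matched_edge[OF b(1) \<open>0 < b\<close>]] 4 by auto
    have "b + 1 + 3 \<le> 2*k - 1" using 4 by arith
    then obtain T where T: "pair_within (b + 1) (2*k - 1) T"
      using self_matched_has_pair[OF self_matched_after[OF whole b(1) \<open>0 < b\<close>]] by blast
    show ?thesis using S T pair_within_disjoint[OF S T] unfolding pair_within_def by auto
  qed
qed

end
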